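(* Let $\theta\in k$ and let $(A,R)$ be a Rota--Baxter algebra of weight $\theta$. For all $b_1,\ldots,b_n\in A$, $$ \sum_{\sigma\in S_n}R\Big(\cdots R\big(R(b_{\sigma(1)})b_{\sigma(2)}\big)\cdots\Big)b_{\sigma(n)}=\sum_{\{P_1,\ldots,P_k\}}b_{P_1}\ast_\theta\cdots\ast_\theta b_{P_k}, $$ where the sum runs over all set partitions $\{P_1,\ldots,P_k\}$ of $\{1,\ldots,n\}$ with blocks indexed so that $\max P_1<\cdots<\max P_k$, and for a block $P_i=\{p_1<\cdots<p_h\}$, $$ b_{P_i}:=\sum_{\sigma\in S_{h-1}}\Big(\cdots\big((b_{p_h}\triangleright_\theta b_{p_{\sigma(h-1)}})\triangleright_\theta b_{p_{\sigma(h-2)}}\big)\cdots\triangleright_\theta b_{p_{\sigma(2)}}\Big)\triangleright_\theta b_{p_{\sigma(1)}} $$ (for $h=1$, $b_{P_i}=b_{p_1}$).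
   Context: $k$ is a field of characteristic zero. A Rota--Baxter algebra of weight $\theta$ is a unital associative algebra $A$ with a linear map $R:A\to A$ such that $R(x)R(y)=R(R(x)y+xR(y))+\theta R(xy)$ for all $x,y\in A$. Define $a\triangleright_\theta b:=R(a)b-bR(a)-\theta ba$ and the (associative) double product $a\ast_\theta b:=R(a)b+aR(b)+\theta ab$. *)

theory Defs
  imports Complex_Main "HOL-Library.Disjoint_Sets" "HOL-Combinatorics.Permutations"
begin

definition k_algebra :: "('k::field \<Rightarrow> 'a::ring_1 \<Rightarrow> 'a) \<Rightarrow> bool" where
  "k_algebra scal \<longleftrightarrow> module scal \<and>
     (\<forall>c x y. scal c (x * y) = scal c x * y \<and> scal c (x * y) = x * scal c y)"

definition rota_baxter :: "('k::field \<Rightarrow> 'a::ring_1 \<Rightarrow> 'a) \<Rightarrow> 'k \<Rightarrow> ('a \<Rightarrow> 'a) \<Rightarrow> bool" where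
  "rota_baxter scal \<theta> R \<longleftrightarrow> k_algebra scal \<and> Vector_Spaces.linear scal scal R \<and>
     (\<forall>x y. R x * R y = R (R x * y + x * R y) + scal \<theta> (R (x * y)))"

definition rb_tri :: "('k \<Rightarrow> 'a::ring_1 \<Rightarrow> 'a) \<Rightarrow> 'k \<Rightarrow> ('a \<Rightarrow> 'a) \<Rightarrow> 'a \<Rightarrow> 'a \<Rightarrow> 'a" where
  "rb_tri scal \<theta> R a b = R a * b - b * R a - scal \<theta> (b * a)"

definition rb_star :: "('k \<Rightarrow> 'a::ring_1 \<Rightarrow> 'a) \<Rightarrow> 'k \<Rightarrow> ('a \<Rightarrow> 'a) \<Rightarrow> 'a \<Rightarrow> 'a \<Rightarrow> 'a" where
  "rb_star scal \<theta> R a b = R a * b + a * R b + scal \<theta> (a * b)"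

text \<open>Iterated double product x1 * (x2 * ( ... * xk)) (the double product is associative).\<close>
fun star_list :: "('a::zero \<Rightarrow> 'a \<Rightarrow> 'a) \<Rightarrow> 'a list \<Rightarrow> 'a" where
  "star_list st [] = 0"
| "star_list st [x] = x"
| "star_list st (x # y # xs) = st x (star_list st (y # xs))"

definition lhs_term :: "('a::ring_1 \<Rightarrow> 'a) \<Rightarrow> (nat \<Rightarrow> 'a) \<Rightarrow> nat \<Rightarrow> (nat \<Rightarrow> nat) \<Rightarrow> 'a" where
  "lhs_term R b n \<sigma> = foldl (\<lambda>acc i. R acc * b (\<sigma> i)) (b (\<sigma> 1)) [2..<n+1]"

definition block_term :: "('k \<Rightarrow> 'a::ring_1 \<Rightarrow> 'a) \<Rightarrow> 'k \<Rightarrow> ('a \<Rightarrow> 'a) \<Rightarrow> (nat \<Rightarrow> 'a) \<Rightarrow> nat set \<Rightarrow> 'a" where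
  "block_term scal \<theta> R b P =
     (let ps = sorted_list_of_set P; h = card P in
      \<Sum>\<sigma> \<in> {\<sigma>. \<sigma> permutes {1..h-1}}.
        foldl (\<lambda>acc i. rb_tri scal \<theta> R acc (b (ps ! (\<sigma> i - 1)))) (b (ps ! (h - 1))) (rev [1..<h]))"

definition blocks_by_max :: "nat set set \<Rightarrow> nat set list" where
  "blocks_by_max Q = map (\<lambda>m. THE B. B \<in> Q \<and> m \<in> B) (sorted_list_of_set (Max ` Q))"

end

theory Submission
  imports Defs "HOL-Combinatorics.Multiset_Permutations"
begin

text \<open>
  Evaluate both sides on an arbitrary finite index set. On the right the block containing the
  largest index \<open>m\<close> comes last, so the right-hand side for \<open>insert m A\<close> is the sum over
  \<open>Y \<subseteq> A\<close> of (the right-hand side for \<open>A - Y\<close>) \<open>\<star> b\<^bsub>insert m Y\<^esub>\<close>, the summand being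
  just \<open>b\<^bsub>insert m Y\<^esub>\<close> when \<open>Y = A\<close>. It suffices that the left-hand side obeys the same
  recursion, which in fact holds for every \<open>m \<notin> A\<close>. This is proved by induction on \<open>A\<close>,
  expanding the left-hand side by its last letter and \<open>b\<^bsub>insert m Y\<^esub>\<close> by its outermost
  \<open>\<triangleright>\<close>-step; the Rota--Baxter identity in the form \<open>R (R x * y + x * (R y + \<theta> y)) = R x * R y\<close>
  matches the two expansions. The same identity gives \<open>R (x \<star> y) = R x * R y\<close>, hence
  associativity of \<open>\<star>\<close>.
\<close>

lemma sum_Pow_sum_mem:
  assumes "finite A"
  shows "(\<Sum>Y\<in>Pow A. \<Sum>y\<in>Y. h y Y) = (\<Sum>y\<in>A. \<Sum>Z\<in>Pow (A - {y}). h y (insert y Z))"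
proof -
  have "(\<Sum>Y\<in>Pow A. \<Sum>y\<in>Y. h y Y) = (\<Sum>(Y, y)\<in>(SIGMA Y:Pow A. Y). h y Y)"
    using assms by (intro sum.Sigma) (auto intro: finite_subset[OF _ assms])
  also have "\<dots> = (\<Sum>(y, Z)\<in>(SIGMA y:A. Pow (A - {y})). h y (insert y Z))"
    by (rule sum.reindex_bij_witness[where i="\<lambda>(y, Z). (insert y Z, y)" and j="\<lambda>(Y, y). (y, Y - {y})"])
       (auto simp: insert_absorb)
  also have "\<dots> = (\<Sum>y\<in>A. \<Sum>Z\<in>Pow (A - {y}). h y (insert y Z))"
    using assms by (intro sum.Sigma[symmetric]) auto
  finally show ?thesis .
qed

lemma sum_Pow_sum_Diff:
  assumes "finite A"
  shows "(\<Sum>Y\<in>Pow A. \<Sum>x\<in>A - Y. h x Y) = (\<Sum>x\<in>A. \<Sum>Y\<in>Pow (A - {x}). h x Y)"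
proof -
  have "(\<Sum>Y\<in>Pow A. \<Sum>x\<in>A - Y. h x Y) = (\<Sum>(Y, x)\<in>(SIGMA Y:Pow A. A - Y). h x Y)"
    using assms by (intro sum.Sigma) auto
  also have "\<dots> = (\<Sum>(x, Y)\<in>(SIGMA x:A. Pow (A - {x})). h x Y)"
    by (rule sum.reindex_bij_witness[where i="\<lambda>(x, Y). (Y, x)" and j="\<lambda>(Y, x). (x, Y)"]) auto
  also have "\<dots> = (\<Sum>x\<in>A. \<Sum>Y\<in>Pow (A - {x}). h x Y)"
    using assms by (intro sum.Sigma[symmetric]) auto
  finally show ?thesis .
qed

lemma sum_permutations_of_set_Cons:
  assumes "finite X" "X \<noteq> {}"
  shows "(\<Sum>xs\<in>permutations_of_set X. g xs) = (\<Sum>x\<in>X. \<Sum>xs\<in>permutations_of_set (X - {x}). g (x # xs))"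
proof -
  have "(\<Sum>xs\<in>permutations_of_set X. g xs) = (\<Sum>x\<in>X. \<Sum>xs\<in>(#) x ` permutations_of_set (X - {x}). g xs)"
    unfolding permutations_of_set_nonempty[OF assms(2)]
    using assms by (intro sum.UNION_disjoint) auto
  also have "\<dots> = (\<Sum>x\<in>X. \<Sum>xs\<in>permutations_of_set (X - {x}). g (x # xs))"
    by (rule sum.cong[OF refl], subst sum.reindex) (auto simp: inj_on_def)
  finally show ?thesis .
qed

lemma sum_permutes_eq_sum_permutations_of_set:
  "(\<Sum>\<sigma> | \<sigma> permutes {1..k::nat}. g (map \<sigma> [1..<k+1])) = (\<Sum>xs\<in>permutations_of_set {1..k}. g xs)"
proof -
  let ?P = "{\<sigma>. \<sigma> permutes {1..k}}"
  let ?f = "\<lambda>\<sigma>. map \<sigma> [1..<k+1]"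
  have inj: "inj_on ?f ?P"
  proof (rule inj_onI, rule ext)
    fix \<sigma> \<tau> x assume \<sigma>: "\<sigma> \<in> ?P" and \<tau>: "\<tau> \<in> ?P" and eq: "?f \<sigma> = ?f \<tau>"
    show "\<sigma> x = \<tau> x"
    proof (cases "x \<in> {1..k}")
      case True
      then have "x \<in> set [1..<k+1]" by auto
      with eq show ?thesis by (metis map_eq_conv)
    next
      case False
      with \<sigma> \<tau> show ?thesis by (simp add: permutes_not_in)
    qed
  qed
  have "?f ` ?P \<subseteq> permutations_of_set {1..k}"
  proof
    fix xs assume "xs \<in> ?f ` ?P"
    then obtain \<sigma> where \<sigma>: "\<sigma> permutes {1..k}" and xs: "xs = ?f \<sigma>" by auto
    have "set xs = \<sigma> ` {1..k}" using xs by (simp del: upt_Suc add: atLeastLessThanSuc_atLeastAtMost)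
    also have "\<dots> = {1..k}" using \<sigma> by (rule permutes_image)
    finally have "set xs = {1..k}" .
    moreover have "distinct xs" unfolding xs distinct_map using permutes_inj_on[OF \<sigma>] by simp
    ultimately show "xs \<in> permutations_of_set {1..k}" by auto
  qed
  moreover have "card (?f ` ?P) = card (permutations_of_set {1..k})"
    using card_image[OF inj] by (simp add: card_permutations)
  ultimately have "?f ` ?P = permutations_of_set {1..k}"
    by (intro card_subset_eq) auto
  then show ?thesis using sum.reindex[OF inj, of g] by simp
qed

lemma bij_betw_nth_pred:
  assumes "distinct ps"
  shows "bij_betw (\<lambda>j. ps ! (j - 1)) {1..length ps} (set ps)"
proof -
  have "bij_betw (\<lambda>j. j - 1) {1..length ps} {..<length ps}"
    by (rule bij_betw_byWitness[where f'=Suc]) auto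
  from bij_betw_trans[OF this bij_betw_nth[OF assms refl refl]] show ?thesis
    by (simp add: comp_def)
qed

lemma sum_permutes_nth_eq_sum_permutations_of_set:
  assumes "distinct ps"
  shows "(\<Sum>\<sigma> | \<sigma> permutes {1..length ps}. g (map (\<lambda>i. ps ! (\<sigma> i - 1)) [1..<length ps + 1])) =
         (\<Sum>ys\<in>permutations_of_set (set ps). g ys)"
proof -
  define q where "q j = ps ! (j - 1)" for j
  have inj: "inj_on q {1..length ps}" and img: "q ` {1..length ps} = set ps"
    using bij_betw_nth_pred[OF assms] unfolding q_def[abs_def] bij_betw_def by auto
  have map_q: "map (\<lambda>i. ps ! (\<sigma> i - 1)) xs = map q (map \<sigma> xs)" for \<sigma> :: "nat \<Rightarrow> nat" and xs
    by (simp add: q_def)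
  have "(\<Sum>\<sigma> | \<sigma> permutes {1..length ps}. g (map (\<lambda>i. ps ! (\<sigma> i - 1)) [1..<length ps + 1])) =
        (\<Sum>\<sigma> | \<sigma> permutes {1..length ps}. g (map q (map \<sigma> [1..<length ps + 1])))"
    by (simp only: map_q)
  also have "\<dots> = (\<Sum>xs\<in>permutations_of_set {1..length ps}. g (map q xs))"
    by (rule sum_permutes_eq_sum_permutations_of_set)
  also have "\<dots> = (\<Sum>ys\<in>map q ` permutations_of_set {1..length ps}. g ys)"
    using inj_on_mapI[of q "permutations_of_set {1..length ps}"] inj
    by (subst sum.reindex) (auto simp: comp_def)
  finally show ?thesis
    unfolding permutations_of_set_image_inj[OF inj, symmetric] img .
qed

lemma sorted_list_of_set_insert_greater:
  assumes "finite M" "\<forall>x\<in>M. x < m"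
  shows "sorted_list_of_set (insert m M) = sorted_list_of_set M @ [m]"
proof (rule sorted_distinct_set_unique)
  show "sorted (sorted_list_of_set M @ [m])" "distinct (sorted_list_of_set M @ [m])"
    using assms by (auto simp: sorted_append less_imp_le)
  show "set (sorted_list_of_set (insert m M)) = set (sorted_list_of_set M @ [m])"
    using assms(1) by (simp del: sorted_list_of_set_insert_remove)
qed simp_all

lemma sorted_list_of_set_remove_Max:
  assumes "finite P" "P \<noteq> {}"
  shows "sorted_list_of_set P = sorted_list_of_set (P - {Max P}) @ [Max P]"
proof -
  have "insert (Max P) (P - {Max P}) = P" using Max_in[OF assms] by auto
  then show ?thesis
    using sorted_list_of_set_insert_greater[of "P - {Max P}" "Max P"] assms
    by (auto simp: order.strict_iff_order simp del: sorted_list_of_set_insert_remove)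
qed

lemma partition_on_the_block:
  assumes "partition_on S Q" "B \<in> Q" "m \<in> B"
  shows "(THE B. B \<in> Q \<and> m \<in> B) = B"
  using assms by (intro the_equality) (auto simp: partition_on_def pairwise_def disjnt_def)

lemma partition_on_insert_block:
  assumes "partition_on (A - Y) Q" "Y \<subseteq> A" "m \<notin> A"
  shows "partition_on (insert m A) (insert (insert m Y) Q)"
proof -
  have "disjnt (insert m Y) (\<Union>Q)"
    using assms partition_onD1[OF assms(1)] by (auto simp: disjnt_def)
  moreover have "insert m A - insert m Y = A - Y" using assms(3) by auto
  ultimately show ?thesis using assms by (auto simp: partition_on_insert)
qed

lemma partition_on_remove_block:
  assumes "partition_on (insert m A) Q" "B \<in> Q" "m \<in> B" "m \<notin> A"
  shows "B - {m} \<subseteq> A" "partition_on (A - (B - {m})) (Q - {B})"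
proof -
  show "B - {m} \<subseteq> A" using assms(1,2) by (auto simp: partition_on_def)
  have "disjnt B (\<Union>(Q - {B}))"
    using assms(1,2) by (auto simp: partition_on_def pairwise_def disjnt_def)
  moreover have "insert B (Q - {B}) = Q" using assms(2) by auto
  ultimately have "partition_on (insert m A - B) (Q - {B})"
    using assms(1) partition_on_insert by metis
  moreover have "insert m A - B = A - (B - {m})" using assms(3,4) by auto
  ultimately show "partition_on (A - (B - {m})) (Q - {B})" by simp
qed

lemma bij_betw_partitions_on_insert:
  assumes "m \<notin> A"
  shows "bij_betw (\<lambda>(Y, Q). insert (insert m Y) Q)
           (SIGMA Y:Pow A. {Q. partition_on (A - Y) Q}) {Q. partition_on (insert m A) Q}"
proof -
  let ?block = "\<lambda>Q. THE B. B \<in> Q \<and> m \<in> B"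
  let ?split = "\<lambda>Q. (?block Q - {m}, Q - {?block Q})"
  have split_join: "?split (insert (insert m Y) Q) = (Y, Q)"
    if Y: "Y \<subseteq> A" and Q: "partition_on (A - Y) Q" for Y Q
  proof -
    have "?block (insert (insert m Y) Q) = insert m Y"
      using partition_on_insert_block[OF Q Y assms] by (rule partition_on_the_block) auto
    moreover have "insert m Y \<notin> Q" using Q assms partition_onD1[OF Q] by auto
    ultimately show ?thesis using Y assms by auto
  qed
  have split_mem: "?split Q \<in> (SIGMA Y:Pow A. {Q. partition_on (A - Y) Q})"
    and join_split: "(\<lambda>(Y, Q). insert (insert m Y) Q) (?split Q) = Q"
    if Q: "partition_on (insert m A) Q" for Q
  proof -
    obtain B where B: "B \<in> Q" "m \<in> B" using Q by (auto simp: partition_on_def)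
    then have "?block Q = B" using Q by (intro partition_on_the_block)
    then show "?split Q \<in> (SIGMA Y:Pow A. {Q. partition_on (A - Y) Q})"
      and "(\<lambda>(Y, Q). insert (insert m Y) Q) (?split Q) = Q"
      using partition_on_remove_block[OF Q B assms] B by (auto simp: insert_absorb)
  qed
  show ?thesis
  proof (rule bij_betw_byWitness[where f'="?split"])
    show "\<forall>p\<in>SIGMA Y:Pow A. {Q. partition_on (A - Y) Q}. ?split ((\<lambda>(Y, Q). insert (insert m Y) Q) p) = p"
      using split_join by auto
    show "\<forall>Q\<in>{Q. partition_on (insert m A) Q}. (\<lambda>(Y, Q). insert (insert m Y) Q) (?split Q) = Q"
      using join_split by blast
    show "(\<lambda>(Y, Q). insert (insert m Y) Q) ` (SIGMA Y:Pow A. {Q. partition_on (A - Y) Q})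
        \<subseteq> {Q. partition_on (insert m A) Q}"
      using assms by (auto intro: partition_on_insert_block)
    show "?split ` {Q. partition_on (insert m A) Q} \<subseteq> (SIGMA Y:Pow A. {Q. partition_on (A - Y) Q})"
      using split_mem by blast
  qed
qed

lemma sum_partitions_on_insert:
  assumes "finite A" "m \<notin> A"
  shows "(\<Sum>Q | partition_on (insert m A) Q. f Q) =
         (\<Sum>Y\<in>Pow A. \<Sum>Q | partition_on (A - Y) Q. f (insert (insert m Y) Q))"
proof -
  have "(\<Sum>Q | partition_on (insert m A) Q. f Q) =
        (\<Sum>(Y, Q)\<in>(SIGMA Y:Pow A. {Q. partition_on (A - Y) Q}). f (insert (insert m Y) Q))"
    using sum.reindex_bij_betw[OF bij_betw_partitions_on_insert[OF assms(2)], of f]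
    by (simp add: case_prod_beta')
  also have "\<dots> = (\<Sum>Y\<in>Pow A. \<Sum>Q | partition_on (A - Y) Q. f (insert (insert m Y) Q))"
    using assms by (intro sum.Sigma[symmetric]) (auto intro: finitely_many_partition_on)
  finally show ?thesis .
qed

lemma blocks_by_max_insert_greater:
  assumes Q: "partition_on X Q" and "finite X" "finite B" "m \<in> B" "\<forall>x\<in>B. x \<le> m"
    and X: "\<forall>x\<in>X. x < m" and "disjnt B X"
  shows "blocks_by_max (insert B Q) = blocks_by_max Q @ [B]"
proof -
  have maxQ: "Max P \<in> X" if "P \<in> Q" for P
  proof -
    have "P \<subseteq> X" "P \<noteq> {}" using that Q by (auto simp: partition_on_def)
    then show ?thesis using \<open>finite X\<close> by (auto intro: Max_in finite_subset[OF _ \<open>finite X\<close>])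
  qed
  have "Max B = m" using assms by (intro Max_eqI) auto
  then have "sorted_list_of_set (Max ` insert B Q) = sorted_list_of_set (Max ` Q) @ [m]"
    using sorted_list_of_set_insert_greater[of "Max ` Q" m] maxQ X finite_elements[OF \<open>finite X\<close> Q]
    by (simp del: sorted_list_of_set_insert_remove)
  moreover have "(THE B'. B' \<in> insert B Q \<and> m \<in> B') = B"
    using assms partition_onD1[OF Q] by (intro the_equality) auto
  moreover have "(THE B'. B' \<in> insert B Q \<and> x \<in> B') = (THE B'. B' \<in> Q \<and> x \<in> B')"
    if "x \<in> Max ` Q" for x
  proof -
    have "x \<notin> B" using that maxQ \<open>disjnt B X\<close> by (auto simp: disjnt_iff)
    then have "(\<lambda>B'. B' \<in> insert B Q \<and> x \<in> B') = (\<lambda>B'. B' \<in> Q \<and> x \<in> B')" by auto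
    then show ?thesis by simp
  qed
  ultimately show ?thesis
    using finite_elements[OF \<open>finite X\<close> Q] by (simp add: blocks_by_max_def)
qed

locale rb_algebra =
  fixes scal :: "'k::field \<Rightarrow> 'a::ring_1 \<Rightarrow> 'a" and \<theta> :: 'k and R :: "'a \<Rightarrow> 'a"
  assumes rota_baxter: "rota_baxter scal \<theta> R"
begin

sublocale R: module_hom scal scal R
  using rota_baxter by (simp add: rota_baxter_def Vector_Spaces.linear_def)

lemma scal_mult_left: "scal c (x * y) = scal c x * y"
  using rota_baxter by (simp add: rota_baxter_def k_algebra_def)

lemma scal_mult_right: "scal c (x * y) = x * scal c y"
  using rota_baxter unfolding rota_baxter_def k_algebra_def by blast

lemma scal_eq_mult: "scal c x = scal c 1 * x"
  using scal_mult_left[of c 1 x] by simp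

lemma scal_one_central: "x * scal c 1 = scal c 1 * x"
  using scal_mult_right[of c x 1] scal_eq_mult[of c x] by simp

lemma rota_baxter_identity: "R x * R y = R (R x * y + x * R y) + scal \<theta> (R (x * y))"
  using rota_baxter by (simp add: rota_baxter_def)

abbreviation rb_star_op (infixr \<open>\<star>\<close> 70) where "x \<star> y \<equiv> rb_star scal \<theta> R x y"
abbreviation rb_tri_op (infixl \<open>\<triangleright>\<close> 70) where "x \<triangleright> y \<equiv> rb_tri scal \<theta> R x y"

text \<open>\<open>R_theta = - R'\<close> for the companion Rota--Baxter operator \<open>R' = - \<theta> id - R\<close>.\<close>
definition R_theta :: "'a \<Rightarrow> 'a" where
  "R_theta x = R x + scal \<theta> x"

lemma R_theta_sum: "R_theta (sum f A) = (\<Sum>a\<in>A. R_theta (f a))"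
  by (simp add: R_theta_def R.sum R.m1.scale_sum_right sum.distrib)

lemma R_R_theta: "R (R x * y + x * R_theta y) = R x * R y"
proof -
  have "scal \<theta> (R (x * y)) = R (x * scal \<theta> y)" by (metis R.scale scal_mult_right)
  then show ?thesis by (simp add: rota_baxter_identity R_theta_def distrib_left R.add add.assoc)
qed

lemma rb_star_eq: "x \<star> y = R x * y + x * R_theta y"
  by (simp add: rb_star_def R_theta_def distrib_left scal_mult_right add.assoc)

lemma rb_tri_eq: "x \<triangleright> y = R x * y - y * R_theta x"
  by (simp add: rb_tri_def R_theta_def distrib_left scal_mult_right diff_diff_eq)

lemma R_rb_star: "R (x \<star> y) = R x * R y"
  by (simp add: rb_star_eq R_R_theta)

lemma rb_star_assoc: "x \<star> (y \<star> z) = (x \<star> y) \<star> z"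
proof -
  define t where "t = scal \<theta> 1"
  have star: "u \<star> v = R u * v + u * R v + t * (u * v)" for u v
    unfolding rb_star_def t_def by (subst scal_eq_mult) (rule refl)
  have central: "u * (t * v) = t * (u * v)" for u v
    unfolding t_def by (simp add: mult.assoc[symmetric] scal_one_central)
  show ?thesis
    unfolding star[of x "y \<star> z"] star[of "x \<star> y" z] R_rb_star unfolding star
    by (simp add: distrib_left distrib_right mult.assoc central[of "R x" "y * z"] central[of x "y * z"] add_ac)
qed

lemma rb_star_sum_left: "sum f A \<star> y = (\<Sum>a\<in>A. f a \<star> y)"
  by (simp add: rb_star_def R.sum sum_distrib_right R.m1.scale_sum_right sum.distrib)

lemma rb_tri_sum_left: "sum f A \<triangleright> y = (\<Sum>a\<in>A. f a \<triangleright> y)"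
  by (simp add: rb_tri_def R.sum sum_distrib_right sum_distrib_left R.m1.scale_sum_right sum_subtractf)

lemma star_list_append_single:
  "xs \<noteq> [] \<Longrightarrow> star_list (\<star>) (xs @ [y]) = star_list (\<star>) xs \<star> y"
proof (induction xs)
  case (Cons x xs)
  then show ?case by (cases xs) (simp_all add: rb_star_assoc)
qed simp

end

locale rb_word = rb_algebra scal \<theta> R
  for scal :: "'k::field \<Rightarrow> 'a::ring_1 \<Rightarrow> 'a" and \<theta> :: 'k and R :: "'a \<Rightarrow> 'a" +
  fixes b :: "nat \<Rightarrow> 'a"
begin

text \<open>The word is read from the right:
  \<open>nest [i\<^sub>k, \<dots>, i\<^sub>1] = R (\<dots> R (R (b i\<^sub>1) * b i\<^sub>2) \<dots>) * b i\<^sub>k\<close>.\<close>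
fun nest :: "nat list \<Rightarrow> 'a" where
  "nest [] = 0"
| "nest [i] = b i"
| "nest (i # j # is) = R (nest (j # is)) * b i"

lemma foldl_nest: "xs \<noteq> [] \<Longrightarrow> foldl (\<lambda>acc i. R acc * b i) (nest xs) ys = nest (rev ys @ xs)"
proof (induction ys arbitrary: xs)
  case (Cons y ys)
  then have "R (nest xs) * b y = nest (y # xs)" by (cases xs) auto
  then show ?case using Cons.IH[of "y # xs"] by simp
qed simp

lemma lhs_term_eq_nest:
  assumes "n \<ge> 1"
  shows "lhs_term R b n \<sigma> = nest (rev (map \<sigma> [1..<n+1]))"
proof -
  have upt: "[1..<n+1] = 1 # [2..<n+1]" using assms by (simp add: upt_conv_Cons numeral_2_eq_2 del: upt_Suc)
  have "lhs_term R b n \<sigma> = foldl (\<lambda>acc i. R acc * b i) (nest [\<sigma> 1]) (map \<sigma> [2..<n+1])"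
    by (simp add: lhs_term_def foldl_map)
  also have "\<dots> = nest (rev (map \<sigma> [2..<n+1]) @ [\<sigma> 1])" by (rule foldl_nest) simp
  also have "\<dots> = nest (rev (map \<sigma> [1..<n+1]))" unfolding upt by simp
  finally show ?thesis .
qed

definition perm_sum :: "nat set \<Rightarrow> 'a" where
  "perm_sum X = (\<Sum>xs\<in>permutations_of_set X. nest xs)"

lemma sum_lhs_term_eq_perm_sum:
  assumes "n \<ge> 1"
  shows "(\<Sum>\<sigma> | \<sigma> permutes {1..n}. lhs_term R b n \<sigma>) = perm_sum {1..n}"
proof -
  have "(\<Sum>\<sigma> | \<sigma> permutes {1..n}. lhs_term R b n \<sigma>) = (\<Sum>xs\<in>permutations_of_set {1..n}. nest (rev xs))"
    using sum_permutes_eq_sum_permutations_of_set[of "\<lambda>xs. nest (rev xs)" n]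
    by (simp add: lhs_term_eq_nest[OF assms])
  also have "\<dots> = (\<Sum>xs\<in>rev ` permutations_of_set {1..n}. nest xs)"
    by (rule sum.reindex[symmetric, unfolded comp_def]) (simp add: inj_on_def)
  finally show ?thesis by (simp add: perm_sum_def)
qed

text \<open>The value \<open>1\<close> at \<open>{}\<close> makes \<open>perm_sum_rec\<close> hold for words of length one.\<close>
definition R_perm_sum :: "nat set \<Rightarrow> 'a" where
  "R_perm_sum X = (if X = {} then 1 else R (perm_sum X))"

lemma perm_sum_empty [simp]: "perm_sum {} = 0"
  by (simp add: perm_sum_def)

lemma perm_sum_rec:
  assumes "finite X"
  shows "perm_sum X = (\<Sum>x\<in>X. R_perm_sum (X - {x}) * b x)"
proof (cases "X = {}")
  case False
  have "(\<Sum>xs\<in>permutations_of_set (X - {x}). nest (x # xs)) = R_perm_sum (X - {x}) * b x" for x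
  proof (cases "X - {x} = {}")
    case True
    show ?thesis unfolding True by (simp add: R_perm_sum_def)
  next
    case False
    have "nest (x # xs) = R (nest xs) * b x" if "xs \<in> permutations_of_set (X - {x})" for xs
    proof -
      have "set xs \<noteq> {}" using permutations_of_setD(1)[OF that] False by simp
      then have "xs \<noteq> []" by simp
      then show ?thesis by (cases xs) auto
    qed
    then show ?thesis using False by (simp add: R_perm_sum_def perm_sum_def R.sum sum_distrib_right)
  qed
  then show ?thesis
    unfolding perm_sum_def sum_permutations_of_set_Cons[OF assms False] by simp
qed simp

definition perm_sum_star :: "nat set \<Rightarrow> 'a \<Rightarrow> 'a" where
  "perm_sum_star C t = (if C = {} then t else perm_sum C \<star> t)"

lemma perm_sum_star_eq: "perm_sum_star C t = R_perm_sum C * t + perm_sum C * R_theta t"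
  by (simp add: perm_sum_star_def R_perm_sum_def rb_star_eq)

lemma R_perm_sum_star: "R (perm_sum_star C t) = R_perm_sum C * R t"
  by (simp add: perm_sum_star_def R_perm_sum_def R_rb_star)

definition block_sum :: "nat \<Rightarrow> nat set \<Rightarrow> 'a" where
  "block_sum m Y = (\<Sum>ys\<in>permutations_of_set Y. foldr (\<lambda>y acc. acc \<triangleright> b y) ys (b m))"

lemma block_sum_empty [simp]: "block_sum m {} = b m"
  by (simp add: block_sum_def)

lemma block_sum_rec:
  assumes "finite Y" "Y \<noteq> {}"
  shows "block_sum m Y =
    (\<Sum>y\<in>Y. R (block_sum m (Y - {y})) * b y - b y * R_theta (block_sum m (Y - {y})))"
  unfolding block_sum_def sum_permutations_of_set_Cons[OF assms]
  by (simp add: rb_tri_sum_left rb_tri_eq R.sum R_theta_sum sum_distrib_left sum_distrib_right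
      sum_subtractf)

lemma block_term_eq_block_sum:
  assumes "finite P" "P \<noteq> {}"
  shows "block_term scal \<theta> R b P = block_sum (Max P) (P - {Max P})"
proof -
  define ps where "ps = sorted_list_of_set (P - {Max P})"
  have sorted_P: "sorted_list_of_set P = ps @ [Max P]"
    unfolding ps_def by (rule sorted_list_of_set_remove_Max[OF assms])
  have "card P = length (sorted_list_of_set P)" by simp
  then have card_P: "card P = length ps + 1" by (simp add: sorted_P)
  have nth: "(ps @ [Max P]) ! (\<sigma> i - 1) = ps ! (\<sigma> i - 1)"
    if "\<sigma> permutes {1..length ps}" "i \<in> set [1..<length ps + 1]" for \<sigma> i
  proof -
    have "i \<in> {1..length ps}" using that(2) by auto
    then have "\<sigma> i \<in> {1..length ps}" using permutes_in_image[OF that(1)] by simp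
    then have "\<sigma> i - 1 < length ps" by (simp only: atLeastAtMost_iff) arith
    then show ?thesis by (simp add: nth_append)
  qed
  have "block_term scal \<theta> R b P = (\<Sum>\<sigma> | \<sigma> permutes {1..length ps}. foldr (\<lambda>y acc. acc \<triangleright> b y)
      (map (\<lambda>i. (ps @ [Max P]) ! (\<sigma> i - 1)) [1..<length ps + 1]) (b (Max P)))"
    unfolding block_term_def Let_def sorted_P card_P
    by (simp add: foldr_conv_foldl rev_map foldl_map del: upt_Suc)
  also have "\<dots> = (\<Sum>\<sigma> | \<sigma> permutes {1..length ps}. foldr (\<lambda>y acc. acc \<triangleright> b y)
      (map (\<lambda>i. ps ! (\<sigma> i - 1)) [1..<length ps + 1]) (b (Max P)))"
    by (intro sum.cong refl) (simp only: mem_Collect_eq nth cong: map_cong)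
  also have "\<dots> = block_sum (Max P) (P - {Max P})"
    using sum_permutes_nth_eq_sum_permutations_of_set
        [of ps "\<lambda>ys. foldr (\<lambda>y acc. acc \<triangleright> b y) ys (b (Max P))"] assms
    by (simp add: block_sum_def ps_def del: upt_Suc)
  finally show ?thesis .
qed

lemma sum_Pow_R_perm_sum_block_sum:
  assumes "finite A"
  shows "(\<Sum>Y\<in>Pow A. R_perm_sum (A - Y) * block_sum m Y) = R_perm_sum A * b m +
    (\<Sum>x\<in>A. \<Sum>Y\<in>Pow (A - {x}).
       R_perm_sum (A - {x} - Y) * (R (block_sum m Y) * b x - b x * R_theta (block_sum m Y)))"
proof -
  let ?h = "\<lambda>y Y. R_perm_sum (A - Y) *
    (R (block_sum m (Y - {y})) * b y - b y * R_theta (block_sum m (Y - {y})))"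
  have "R_perm_sum (A - Y) * block_sum m Y = (if Y = {} then R_perm_sum A * b m else 0) + (\<Sum>y\<in>Y. ?h y Y)"
    if "Y \<in> Pow A" for Y
  proof (cases "Y = {}")
    case False
    moreover have "finite Y" using that assms by (auto intro: finite_subset)
    ultimately show ?thesis by (simp add: block_sum_rec sum_distrib_left)
  qed simp
  then have "(\<Sum>Y\<in>Pow A. R_perm_sum (A - Y) * block_sum m Y) =
      R_perm_sum A * b m + (\<Sum>Y\<in>Pow A. \<Sum>y\<in>Y. ?h y Y)"
    using assms by (simp add: sum.distrib)
  also have "(\<Sum>Y\<in>Pow A. \<Sum>y\<in>Y. ?h y Y) = (\<Sum>y\<in>A. \<Sum>Z\<in>Pow (A - {y}). ?h y (insert y Z))"
    by (rule sum_Pow_sum_mem[OF assms])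
  also have "\<dots> = (\<Sum>x\<in>A. \<Sum>Y\<in>Pow (A - {x}).
       R_perm_sum (A - {x} - Y) * (R (block_sum m Y) * b x - b x * R_theta (block_sum m Y)))"
  proof (intro sum.cong refl)
    fix x Z assume "x \<in> A" "Z \<in> Pow (A - {x})"
    then have "A - insert x Z = A - {x} - Z" "insert x Z - {x} = Z" by auto
    then show "?h x (insert x Z) = R_perm_sum (A - {x} - Z) *
        (R (block_sum m Z) * b x - b x * R_theta (block_sum m Z))" by simp
  qed
  finally show ?thesis .
qed

lemma sum_Pow_perm_sum_mult:
  assumes "finite A"
  shows "(\<Sum>Y\<in>Pow A. perm_sum (A - Y) * g Y) =
    (\<Sum>x\<in>A. \<Sum>Y\<in>Pow (A - {x}). R_perm_sum (A - {x} - Y) * (b x * g Y))"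
proof -
  have "A - Y - {x} = A - {x} - Y" for x Y by blast
  then have "(\<Sum>Y\<in>Pow A. perm_sum (A - Y) * g Y) =
      (\<Sum>Y\<in>Pow A. \<Sum>x\<in>A - Y. R_perm_sum (A - {x} - Y) * (b x * g Y))"
    using assms by (simp add: perm_sum_rec sum_distrib_right mult.assoc)
  also have "\<dots> = (\<Sum>x\<in>A. \<Sum>Y\<in>Pow (A - {x}). R_perm_sum (A - {x} - Y) * (b x * g Y))"
    by (rule sum_Pow_sum_Diff[OF assms])
  finally show ?thesis .
qed

text \<open>This is the recursion of \<open>partition_sum\<close> in its largest element
  (\<open>partition_sum_insert_greater\<close>), but it holds for any \<open>m \<notin> A\<close>.\<close>
lemma perm_sum_insert:
  "finite A \<Longrightarrow> m \<notin> A \<Longrightarrow>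
    perm_sum (insert m A) = (\<Sum>Y\<in>Pow A. perm_sum_star (A - Y) (block_sum m Y))"
proof (induction A rule: finite_psubset_induct)
  case (psubset A)
  have IH: "R_perm_sum (insert m (A - {x})) =
      (\<Sum>Y\<in>Pow (A - {x}). R_perm_sum (A - {x} - Y) * R (block_sum m Y))" if "x \<in> A" for x
  proof -
    have "perm_sum (insert m (A - {x})) =
        (\<Sum>Y\<in>Pow (A - {x}). perm_sum_star (A - {x} - Y) (block_sum m Y))"
      using that psubset by (intro psubset.IH) auto
    then show ?thesis by (simp add: R_perm_sum_def R.sum R_perm_sum_star)
  qed
  have "perm_sum (insert m A) = R_perm_sum A * b m + (\<Sum>x\<in>A. R_perm_sum (insert m A - {x}) * b x)"
    using psubset.hyps psubset.prems by (simp add: perm_sum_rec)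
  also have "\<dots> = R_perm_sum A * b m + (\<Sum>x\<in>A. R_perm_sum (insert m (A - {x})) * b x)"
    using psubset.prems by (intro arg_cong2[where f="(+)"] sum.cong refl) (auto simp: insert_Diff_if)
  also have "\<dots> = R_perm_sum A * b m +
      (\<Sum>x\<in>A. \<Sum>Y\<in>Pow (A - {x}). R_perm_sum (A - {x} - Y) * (R (block_sum m Y) * b x))"
    by (simp add: IH sum_distrib_right mult.assoc)
  also have "\<dots> = (\<Sum>Y\<in>Pow A. R_perm_sum (A - Y) * block_sum m Y) +
      (\<Sum>Y\<in>Pow A. perm_sum (A - Y) * R_theta (block_sum m Y))"
    by (simp add: sum_Pow_R_perm_sum_block_sum sum_Pow_perm_sum_mult psubset.hyps add.assoc
        sum.distrib[symmetric] right_diff_distrib)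
  also have "\<dots> = (\<Sum>Y\<in>Pow A. perm_sum_star (A - Y) (block_sum m Y))"
    by (simp add: perm_sum_star_eq sum.distrib)
  finally show ?case .
qed

definition partition_sum :: "nat set \<Rightarrow> 'a" where
  "partition_sum S =
    (\<Sum>Q | partition_on S Q. star_list (\<star>) (map (block_term scal \<theta> R b) (blocks_by_max Q)))"

lemma partition_sum_insert_greater:
  assumes "finite A" "\<forall>x\<in>A. x < m"
  shows "partition_sum (insert m A) =
    (\<Sum>Y\<in>Pow A. if A - Y = {} then block_sum m Y else partition_sum (A - Y) \<star> block_sum m Y)"
proof -
  have "m \<notin> A" using assms by auto
  have split_block: "(\<Sum>Q | partition_on (A - Y) Q.
          star_list (\<star>) (map (block_term scal \<theta> R b) (blocks_by_max (insert (insert m Y) Q)))) =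
        (if A - Y = {} then block_sum m Y else partition_sum (A - Y) \<star> block_sum m Y)"
    if "Y \<subseteq> A" for Y
  proof -
    have "finite Y" using that assms by (auto intro: finite_subset)
    then have "Max (insert m Y) = m" using that assms by (intro Max_eqI) (auto simp: less_imp_le)
    moreover have "insert m Y - {m} = Y" using \<open>m \<notin> A\<close> that by auto
    ultimately have block: "block_term scal \<theta> R b (insert m Y) = block_sum m Y"
      using block_term_eq_block_sum[of "insert m Y"] \<open>finite Y\<close> by simp
    have blocks: "blocks_by_max (insert (insert m Y) Q) = blocks_by_max Q @ [insert m Y]"
      if "partition_on (A - Y) Q" for Q
      using that \<open>finite Y\<close> \<open>Y \<subseteq> A\<close> assms
      by (intro blocks_by_max_insert_greater[where X="A - Y"]) (auto simp: disjnt_def less_imp_le)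
    show ?thesis
    proof (cases "A - Y = {}")
      case True
      have "blocks_by_max {insert m Y} = [insert m Y]"
        using blocks[of "{}"] unfolding True by (simp add: partition_on_empty blocks_by_max_def)
      then show ?thesis unfolding True by (simp add: partition_on_empty block)
    next
      case False
      have "blocks_by_max Q \<noteq> []" if "partition_on (A - Y) Q" for Q
        using that False finite_elements[OF _ that] assms
        by (auto simp: blocks_by_max_def partition_on_def)
      then show ?thesis
        using False by (simp add: blocks block star_list_append_single partition_sum_def rb_star_sum_left)
    qed
  qed
  have "partition_sum (insert m A) = (\<Sum>Y\<in>Pow A. \<Sum>Q | partition_on (A - Y) Q.
      star_list (\<star>) (map (block_term scal \<theta> R b) (blocks_by_max (insert (insert m Y) Q))))"
    unfolding partition_sum_def by (rule sum_partitions_on_insert[OF assms(1) \<open>m \<notin> A\<close>])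
  also have "\<dots> = (\<Sum>Y\<in>Pow A. if A - Y = {} then block_sum m Y else partition_sum (A - Y) \<star> block_sum m Y)"
    by (intro sum.cong refl split_block) simp
  finally show ?thesis .
qed

lemma partition_sum_eq_perm_sum: "finite S \<Longrightarrow> S \<noteq> {} \<Longrightarrow> partition_sum S = perm_sum S"
proof (induction S rule: finite_psubset_induct)
  case (psubset S)
  define m where "m = Max S"
  define A where "A = S - {m}"
  have S: "S = insert m A" and "m \<notin> A" "finite A"
    using Max_in psubset by (auto simp: A_def m_def)
  have "\<forall>x\<in>A. x < m" using psubset by (auto simp: A_def m_def less_le)
  then have "partition_sum S =
      (\<Sum>Y\<in>Pow A. if A - Y = {} then block_sum m Y else partition_sum (A - Y) \<star> block_sum m Y)"
    unfolding S by (rule partition_sum_insert_greater[OF \<open>finite A\<close>])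
  also have "\<dots> = (\<Sum>Y\<in>Pow A. perm_sum_star (A - Y) (block_sum m Y))"
  proof -
    have "partition_sum (A - Y) = perm_sum (A - Y)" if "A - Y \<noteq> {}" for Y
      using that S \<open>m \<notin> A\<close> \<open>finite A\<close> by (intro psubset.IH) auto
    then show ?thesis by (intro sum.cong refl) (auto simp: perm_sum_star_def)
  qed
  also have "\<dots> = perm_sum S"
    unfolding S using \<open>finite A\<close> \<open>m \<notin> A\<close> by (rule perm_sum_insert[symmetric])
  finally show ?case .
qed

end

theorem corollary3p6:
  fixes scal :: "'k::field_char_0 \<Rightarrow> 'a::ring_1 \<Rightarrow> 'a"
    and \<theta> :: 'k and R :: "'a \<Rightarrow> 'a" and b :: "nat \<Rightarrow> 'a" and n :: nat
  assumes "rota_baxter scal \<theta> R"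
    and "n \<ge> 1"
  shows "(\<Sum>\<sigma> \<in> {\<sigma>. \<sigma> permutes {1..n}}. lhs_term R b n \<sigma>) =
         (\<Sum>Q \<in> {Q. partition_on {1..n} Q}.
            star_list (rb_star scal \<theta> R) (map (block_term scal \<theta> R b) (blocks_by_max Q)))"
proof -
  interpret rb_word scal \<theta> R b by unfold_locales (fact assms(1))
  have "(\<Sum>\<sigma> \<in> {\<sigma>. \<sigma> permutes {1..n}}. lhs_term R b n \<sigma>) = perm_sum {1..n}"
    using assms(2) by (rule sum_lhs_term_eq_perm_sum)
  also have "\<dots> = partition_sum {1..n}"
    using assms(2) by (simp add: partition_sum_eq_perm_sum)
  finally show ?thesis by (simp add: partition_sum_def)
qed

end
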